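(* Let $a\in(0,1)$ and $\theta>0$ be as in the context and write $\Gamma=\Gamma(\zeta+1)$. Then for all $t>0$: for $\zeta>0$: $\dfrac{\Gamma}{a^{-\zeta}-1}\le h^{(1,\zeta)}_t\le\dfrac{a^{-\zeta}\Gamma}{a^{-\zeta}-1}$; for $-1<\zeta<0$: $\dfrac{a^{-\zeta}\Gamma}{1-a^{-\zeta}}\le h^{(2,\zeta)}_t\le\dfrac{\Gamma}{1-a^{-\zeta}}$; $\dfrac{a^{-\zeta}(2-2^{-\zeta})\Gamma}{1-a^{-\zeta}}\le h^{(3,\zeta)}_t\le\dfrac{(2-2^{-\zeta})\Gamma}{1-a^{-\zeta}}$; $\dfrac{a^{-\zeta}\Gamma}{(1-a^{-\zeta})(1-\zeta)}\le\tilde h^{(2,\zeta)}_t\le\dfrac{\Gamma}{(1-a^{-\zeta})(1-\zeta)}$; $\dfrac{a^{-\zeta}(2-2^{-\zeta})\Gamma}{(1-a^{-\zeta})(1-\zeta)}\le\tilde h^{(3,\zeta)}_t\le\dfrac{(2-2^{-\zeta})\Gamma}{(1-a^{-\zeta})(1-\zeta)}$.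
   Context: Let $N\ge2$, $0<c<N$, $\sigma>0$, $a=c/N$, $\theta=\sigma(N^2/c-1)/(N-1)$. For $t>0$: for $\zeta>0$, $h^{(1,\zeta)}_t=\sum_{j\in\mathbb Z}(\theta a^jt)^\zeta e^{-\theta a^jt}$; for $-1<\zeta<0$, $h^{(2,\zeta)}_t=\sum_{j\in\mathbb Z}(\theta a^jt)^\zeta(1-e^{-\theta a^jt})$, $h^{(3,\zeta)}_t=\sum_{j\in\mathbb Z}(\theta a^jt)^\zeta(1-e^{-\theta a^jt})^2$, $\tilde h^{(2,\zeta)}_t=\sum_{j\in\mathbb Z}(\theta a^jt)^{\zeta-1}(e^{-\theta a^jt}-1+\theta a^jt)$, $\tilde h^{(3,\zeta)}_t=\sum_{j\in\mathbb Z}(\theta a^jt)^{\zeta-1}(2e^{-\theta a^jt}-\frac12e^{-2\theta a^jt}+\theta a^jt-\frac32)$. *)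

theory Defs
  imports "HOL-Analysis.Analysis"
begin

definition h1 :: "real \<Rightarrow> real \<Rightarrow> real \<Rightarrow> real \<Rightarrow> real" where
  "h1 a \<theta> \<zeta> t = (\<Sum>\<^sub>\<infinity>j::int. (\<theta> * a powi j * t) powr \<zeta> * exp (- (\<theta> * a powi j * t)))"

definition h2 :: "real \<Rightarrow> real \<Rightarrow> real \<Rightarrow> real \<Rightarrow> real" where
  "h2 a \<theta> \<zeta> t = (\<Sum>\<^sub>\<infinity>j::int. (\<theta> * a powi j * t) powr \<zeta> * (1 - exp (- (\<theta> * a powi j * t))))"

definition h3 :: "real \<Rightarrow> real \<Rightarrow> real \<Rightarrow> real \<Rightarrow> real" where
  "h3 a \<theta> \<zeta> t = (\<Sum>\<^sub>\<infinity>j::int. (\<theta> * a powi j * t) powr \<zeta> * (1 - exp (- (\<theta> * a powi j * t)))\<^sup>2)"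

definition ht2 :: "real \<Rightarrow> real \<Rightarrow> real \<Rightarrow> real \<Rightarrow> real" where
  "ht2 a \<theta> \<zeta> t = (\<Sum>\<^sub>\<infinity>j::int. (\<theta> * a powi j * t) powr (\<zeta> - 1) *
      (exp (- (\<theta> * a powi j * t)) - 1 + \<theta> * a powi j * t))"

definition ht3 :: "real \<Rightarrow> real \<Rightarrow> real \<Rightarrow> real \<Rightarrow> real" where
  "ht3 a \<theta> \<zeta> t = (\<Sum>\<^sub>\<infinity>j::int. (\<theta> * a powi j * t) powr (\<zeta> - 1) *
      (2 * exp (- (\<theta> * a powi j * t)) - 1/2 * exp (- 2 * (\<theta> * a powi j * t))
       + \<theta> * a powi j * t - 3/2))"

end

theory Submission
  imports Defs
begin

text \<open>
  With x = \<theta> t each of the five functions is a lattice sum of f(x a^j) over j in \<int> with f \<ge> 0.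
  Such sums are treated as nonnegative integrals over the counting measure, so that they can be
  exchanged freely with Lebesgue integrals.

  The summands of h1, h2, h3 are mixtures f(u) = u^\<zeta> \<integral> \<phi>(y) dy over R(u), where
  R(u) = [u, \<infinity>) if \<zeta> > 0, R(u) = [0, u] if \<zeta> < 0, and \<phi>(y) is exp(-y) or
  2 exp(-y) - 2 exp(-2y). After exchanging sum and integral, the inner sum for fixed y > 0 runs over
  the lattice points u with y in R(u); it is a geometric series in q = a^|\<zeta>| whose leading term
  lies between q y^\<zeta> and y^\<zeta>. Integrating y^\<zeta> \<phi>(y) then gives \<Gamma>(\<zeta>+1), resp.
  (2 - 2^-\<zeta>) \<Gamma>(\<zeta>+1).

  The summands of the two tilde functions are averages of those of h2 and h3:
  g(u) = \<integral> s^-\<zeta> f(u s) ds over [0, 1]. The bounds for h2 and h3 hold for every x, so averaging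
  multiplies them by \<integral> s^-\<zeta> ds = 1/(1-\<zeta>).
\<close>

definition nn_lattice_sum :: "real \<Rightarrow> real \<Rightarrow> (real \<Rightarrow> real) \<Rightarrow> ennreal" where
  "nn_lattice_sum a x f = (\<integral>\<^sup>+j. ennreal (f (x * a powi j)) \<partial>count_space UNIV)"

lemma ennreal_infsum_eq_nn_integral:
  fixes f :: "'a \<Rightarrow> real"
  assumes "\<And>x. 0 \<le> f x" and "(\<integral>\<^sup>+x. ennreal (f x) \<partial>count_space UNIV) \<noteq> \<infinity>"
  shows "ennreal (\<Sum>\<^sub>\<infinity>x. f x) = (\<integral>\<^sup>+x. ennreal (f x) \<partial>count_space UNIV)"
proof -
  have "integrable (count_space UNIV) f"
    using assms by (intro integrableI_bounded) (auto simp: less_top)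
  then have "Infinite_Set_Sum.abs_summable_on f UNIV"
    by (simp add: abs_summable_on_def)
  then show ?thesis
    using assms(1) by (simp add: nn_integral_conv_infsetsum infsetsum_infsum)
qed

lemma infsum_lattice_in_interval:
  fixes f :: "real \<Rightarrow> real" and a x L U :: real
  assumes "0 < a" "0 < x" "\<And>u. 0 < u \<Longrightarrow> 0 \<le> f u" "0 \<le> L" "0 \<le> U"
    and "nn_lattice_sum a x f \<in> {ennreal L..ennreal U}"
  shows "(\<Sum>\<^sub>\<infinity>j. f (x * a powi j)) \<in> {L..U}"
proof -
  have nonneg: "0 \<le> f (x * a powi j)" for j
    using assms by simp
  have "ennreal (\<Sum>\<^sub>\<infinity>j. f (x * a powi j)) = nn_lattice_sum a x f"
    using nonneg assms(6) unfolding nn_lattice_sum_def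
    by (intro ennreal_infsum_eq_nn_integral) (auto simp: top_unique)
  then have "ennreal L \<le> ennreal (\<Sum>\<^sub>\<infinity>j. f (x * a powi j))" "ennreal (\<Sum>\<^sub>\<infinity>j. f (x * a powi j)) \<le> ennreal U"
    using assms(6) by auto
  then show ?thesis
    using assms(5) infsum_nonneg[of UNIV "\<lambda>j. f (x * a powi j)"] nonneg by simp
qed

lemma nn_integral_count_space_mixture_bounds:
  fixes k :: "'i::countable \<Rightarrow> 'a \<Rightarrow> ennreal" and \<psi> w :: "'a \<Rightarrow> ennreal"
  assumes [measurable]: "\<And>i. k i \<in> borel_measurable M" "\<psi> \<in> borel_measurable M" "w \<in> borel_measurable M"
    and bounds: "AE y in M. \<psi> y \<noteq> 0 \<longrightarrow>
      (\<integral>\<^sup>+i. k i y \<partial>count_space UNIV) \<in> {lo * w y..hi * w y}"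
  shows "(\<integral>\<^sup>+i. \<integral>\<^sup>+y. k i y * \<psi> y \<partial>M \<partial>count_space UNIV)
           \<in> {lo * (\<integral>\<^sup>+y. w y * \<psi> y \<partial>M)..hi * (\<integral>\<^sup>+y. w y * \<psi> y \<partial>M)}"
proof -
  have swap: "(\<integral>\<^sup>+i. \<integral>\<^sup>+y. k i y * \<psi> y \<partial>M \<partial>count_space UNIV)
      = (\<integral>\<^sup>+y. (\<integral>\<^sup>+i. k i y \<partial>count_space UNIV) * \<psi> y \<partial>M)"
    by (simp add: nn_integral_count_space_nn_integral[symmetric] nn_integral_multc)
  have "lo * (\<integral>\<^sup>+y. w y * \<psi> y \<partial>M) = (\<integral>\<^sup>+y. lo * w y * \<psi> y \<partial>M)"
    by (simp add: nn_integral_cmult mult.assoc)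
  also have "\<dots> \<le> (\<integral>\<^sup>+y. (\<integral>\<^sup>+i. k i y \<partial>count_space UNIV) * \<psi> y \<partial>M)"
    using bounds by (intro nn_integral_mono_AE) (auto elim!: eventually_mono intro: mult_right_mono)
  finally have lower: "lo * (\<integral>\<^sup>+y. w y * \<psi> y \<partial>M) \<le> \<dots>" .
  have "(\<integral>\<^sup>+y. (\<integral>\<^sup>+i. k i y \<partial>count_space UNIV) * \<psi> y \<partial>M) \<le> (\<integral>\<^sup>+y. hi * w y * \<psi> y \<partial>M)"
    using bounds by (intro nn_integral_mono_AE) (auto elim!: eventually_mono intro: mult_right_mono)
  also have "\<dots> = hi * (\<integral>\<^sup>+y. w y * \<psi> y \<partial>M)"
    by (simp add: nn_integral_cmult mult.assoc)
  finally show ?thesis using lower swap by simp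
qed

lemma nn_integral_geometric_from:
  fixes J :: int and c q :: real
  assumes "0 \<le> q" "q < 1" "0 \<le> c"
  shows "(\<integral>\<^sup>+j. ennreal (c * q ^ nat (j - J)) * indicator {J..} j \<partial>count_space UNIV) = ennreal (c / (1 - q))"
proof -
  have bij: "bij_betw (\<lambda>k. J + int k) UNIV {J..}"
    by (rule bij_betwI[where g="\<lambda>j. nat (j - J)"]) auto
  have "(\<integral>\<^sup>+j. ennreal (c * q ^ nat (j - J)) * indicator {J..} j \<partial>count_space UNIV)
      = (\<integral>\<^sup>+j. ennreal (c * q ^ nat (j - J)) \<partial>count_space {J..})"
    by (simp add: nn_integral_count_space_indicator)
  also have "\<dots> = (\<Sum>k. ennreal (c * q ^ k))"
    by (simp flip: nn_integral_bij_count_space[OF bij] add: nn_integral_count_space_nat)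
  also have "\<dots> = ennreal (c / (1 - q))"
    using assms by (subst suminf_ennreal2) (auto simp: suminf_mult suminf_geometric)
  finally show ?thesis .
qed

lemma lattice_threshold:
  fixes a x y :: real
  assumes "0 < a" "a < 1" "0 < x" "0 < y"
  obtains J :: int where "\<And>j. x * a powi j \<le> y \<longleftrightarrow> J \<le> j"
proof
  fix j :: int
  have "x * a powi j \<le> y \<longleftrightarrow> ln x + of_int j * ln a \<le> ln y"
    using assms by (simp add: ln_mult powr_real_of_int'[symmetric] ln_le_cancel_iff[symmetric] del: ln_le_cancel_iff)
  also have "\<dots> \<longleftrightarrow> (ln y - ln x) / ln a \<le> of_int j"
    using assms by (simp add: neg_divide_le_eq algebra_simps)
  also have "\<dots> \<longleftrightarrow> \<lceil>(ln y - ln x) / ln a\<rceil> \<le> j"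
    by (simp add: ceiling_le_iff)
  finally show "x * a powi j \<le> y \<longleftrightarrow> \<lceil>(ln y - ln x) / ln a\<rceil> \<le> j" .
qed

lemma lattice_powr_sum_below:
  fixes a x y \<zeta> :: real
  assumes a: "0 < a" "a < 1" and "0 < x" "0 < y" "0 < \<zeta>"
  shows "(\<integral>\<^sup>+j. ennreal ((x * a powi j) powr \<zeta>) * indicator {x * a powi j..} y \<partial>count_space UNIV)
           \<in> {ennreal (a powr \<zeta> / (1 - a powr \<zeta>) * y powr \<zeta>)..ennreal (1 / (1 - a powr \<zeta>) * y powr \<zeta>)}"
proof -
  obtain J where J: "\<And>j. x * a powi j \<le> y \<longleftrightarrow> J \<le> j"
    using lattice_threshold[OF assms(1-4)] by blast
  define q where "q = a powr \<zeta>"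
  define c where "c = (x * a powi J) powr \<zeta>"
  have q: "0 < q" "q < 1"
    using assms powr01_less_one by (auto simp: q_def)
  have geometric: "(x * a powi j) powr \<zeta> = c * q ^ nat (j - J)" if "J \<le> j" for j
  proof -
    have "x * a powi j = x * a powi J * a ^ nat (j - J)"
      using that a by (simp add: power_int_add[symmetric] flip: power_int_of_nat)
    then show ?thesis
      using assms by (simp add: c_def q_def powr_mult powr_realpow[symmetric] powr_powr mult_ac)
  qed
  have "(\<integral>\<^sup>+j. ennreal ((x * a powi j) powr \<zeta>) * indicator {x * a powi j..} y \<partial>count_space UNIV)
      = (\<integral>\<^sup>+j. ennreal (c * q ^ nat (j - J)) * indicator {J..} j \<partial>count_space UNIV)"
    by (intro nn_integral_cong) (auto simp: indicator_def J geometric)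
  also have "\<dots> = ennreal (c / (1 - q))"
    using q by (intro nn_integral_geometric_from) (auto simp: c_def)
  finally have sum: "(\<integral>\<^sup>+j. ennreal ((x * a powi j) powr \<zeta>) * indicator {x * a powi j..} y \<partial>count_space UNIV)
      = ennreal (c / (1 - q))" .
  have "a * y < x * a powi J"
    using J[of "J - 1"] a by (auto simp: power_int_diff field_simps)
  moreover have "x * a powi J \<le> y"
    using J by simp
  ultimately have "q * y powr \<zeta> \<le> c" "c \<le> y powr \<zeta>"
    using assms by (auto simp: q_def c_def powr_mult[symmetric] intro!: powr_mono2)
  then show ?thesis
    using q unfolding sum q_def[symmetric] by (auto intro!: ennreal_leI divide_right_mono)
qed

lemma lattice_powr_sum_above:
  fixes a x y \<zeta> :: real
  assumes a: "0 < a" "a < 1" and x: "0 < x" and y: "0 < y" and "\<zeta> < 0"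
  shows "(\<integral>\<^sup>+j. ennreal ((x * a powi j) powr \<zeta>) * indicator {0..x * a powi j} y \<partial>count_space UNIV)
           \<in> {ennreal (a powr -\<zeta> / (1 - a powr -\<zeta>) * y powr \<zeta>)..ennreal (1 / (1 - a powr -\<zeta>) * y powr \<zeta>)}"
proof -
  \<comment> \<open>Reflecting j to -j turns the lattice points above y into the points of the lattice
    x^-1 a^j below 1/y.\<close>
  have reflect: "ennreal ((x * a powi (-j)) powr \<zeta>) * indicator {0..x * a powi (-j)} y
      = ennreal ((inverse x * a powi j) powr (-\<zeta>)) * indicator {inverse x * a powi j..} (inverse y)" for j
  proof -
    define z where "z = inverse x * a powi j"
    have z: "0 < z"
      using a x by (simp add: z_def)
    have "x * a powi (-j) = inverse z"
      using x by (simp add: z_def power_int_minus)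
    moreover have "y \<le> inverse z \<longleftrightarrow> z \<le> inverse y"
      using y z by (metis inverse_inverse_eq inverse_le_iff_le positive_imp_inverse_positive)
    ultimately show ?thesis
      unfolding z_def[symmetric] using y z by (simp add: indicator_def inverse_powr powr_minus)
  qed
  have "(\<integral>\<^sup>+j. ennreal ((x * a powi j) powr \<zeta>) * indicator {0..x * a powi j} y \<partial>count_space UNIV)
      = (\<integral>\<^sup>+j. ennreal ((inverse x * a powi j) powr (-\<zeta>)) * indicator {inverse x * a powi j..} (inverse y) \<partial>count_space UNIV)"
    by (subst nn_integral_bij_count_space[OF bij_uminus, symmetric]) (simp add: reflect)
  also have "\<dots> \<in> {ennreal (a powr -\<zeta> / (1 - a powr -\<zeta>) * inverse y powr -\<zeta>)..ennreal (1 / (1 - a powr -\<zeta>) * inverse y powr -\<zeta>)}"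
    using assms by (intro lattice_powr_sum_below) auto
  finally show ?thesis
    by (simp add: inverse_powr powr_minus)
qed

lemma nn_lattice_sum_powr_mixture:
  fixes \<phi> f :: "real \<Rightarrow> real" and R :: "real \<Rightarrow> real set" and a x \<zeta> C lo hi :: real
  assumes "0 < a" "0 < x"
    and \<phi>_measurable[measurable]: "\<phi> \<in> borel_measurable borel"
    and \<phi>_nonneg: "\<And>y. 0 \<le> y \<Longrightarrow> 0 \<le> \<phi> y"
    and R_measurable[measurable]: "\<And>u. R u \<in> sets borel"
    and R_nonneg: "\<And>u. 0 < u \<Longrightarrow> R u \<subseteq> {0..}"
    and f: "\<And>u. 0 < u \<Longrightarrow> ((\<lambda>y. u powr \<zeta> * \<phi> y) has_integral f u) (R u)"
    and C: "((\<lambda>y. y powr \<zeta> * \<phi> y) has_integral C) {0..}"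
    and inner: "\<And>y. 0 < y \<Longrightarrow>
      (\<integral>\<^sup>+j. ennreal ((x * a powi j) powr \<zeta>) * indicator (R (x * a powi j)) y \<partial>count_space UNIV)
        \<in> {ennreal (lo * y powr \<zeta>)..ennreal (hi * y powr \<zeta>)}"
  shows "nn_lattice_sum a x f \<in> {ennreal (lo * C)..ennreal (hi * C)}"
proof -
  define u where "u j = x * a powi j" for j
  have u: "0 < u j" for j
    using assms by (simp add: u_def)
  define \<psi> where "\<psi> y = ennreal (\<phi> y) * indicator {0..} y" for y
  have split: "ennreal (c * \<phi> y) * indicator S y = (ennreal c * indicator S y) * \<psi> y"
    if "0 \<le> c" "S \<subseteq> {0..}" for c y and S :: "real set"
    using that \<phi>_nonneg by (auto simp: \<psi>_def indicator_def ennreal_mult)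
  have lattice_term: "ennreal (f (u j)) = (\<integral>\<^sup>+y. (ennreal (u j powr \<zeta>) * indicator (R (u j)) y) * \<psi> y \<partial>lborel)" for j
  proof -
    have "(\<integral>\<^sup>+y. ennreal (u j powr \<zeta> * \<phi> y) * indicator (R (u j)) y \<partial>lborel) = ennreal (f (u j))"
      by (rule nn_integral_has_integral_lebesgue'[OF _ f[OF u[of j]]]) (use R_nonneg[OF u[of j]] \<phi>_nonneg in \<open>auto intro!: mult_nonneg_nonneg\<close>)
    then show ?thesis
      using R_nonneg[OF u[of j]] by (simp add: split)
  qed
  have "(\<integral>\<^sup>+y. ennreal (y powr \<zeta>) * \<psi> y \<partial>lborel) = (\<integral>\<^sup>+y. ennreal (y powr \<zeta> * \<phi> y) * indicator {0..} y \<partial>lborel)"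
    by (intro nn_integral_cong) (auto simp: \<psi>_def indicator_def ennreal_mult \<phi>_nonneg)
  also have "\<dots> = ennreal C"
    by (rule nn_integral_has_integral_lebesgue'[OF _ C]) (simp add: \<phi>_nonneg)
  finally have total: "(\<integral>\<^sup>+y. ennreal (y powr \<zeta>) * \<psi> y \<partial>lborel) = ennreal C" .
  have "C \<ge> 0"
    by (rule has_integral_nonneg[OF C]) (simp add: \<phi>_nonneg)
  have inner_AE: "AE y in lborel. \<psi> y \<noteq> 0 \<longrightarrow> (\<integral>\<^sup>+j. ennreal (u j powr \<zeta>) * indicator (R (u j)) y \<partial>count_space UNIV)
      \<in> {ennreal lo * ennreal (y powr \<zeta>)..ennreal hi * ennreal (y powr \<zeta>)}"
    using AE_lborel_singleton[of 0]
  proof (eventually_elim, intro impI)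
    fix y :: real
    assume "y \<noteq> 0" and "\<psi> y \<noteq> 0"
    then have "0 < y"
      by (auto simp: \<psi>_def indicator_def split: if_splits)
    then show "(\<integral>\<^sup>+j. ennreal (u j powr \<zeta>) * indicator (R (u j)) y \<partial>count_space UNIV)
        \<in> {ennreal lo * ennreal (y powr \<zeta>)..ennreal hi * ennreal (y powr \<zeta>)}"
      using inner[of y] by (simp add: u_def ennreal_mult'')
  qed
  have "(\<integral>\<^sup>+j. \<integral>\<^sup>+y. (ennreal (u j powr \<zeta>) * indicator (R (u j)) y) * \<psi> y \<partial>lborel \<partial>count_space UNIV)
      \<in> {ennreal lo * ennreal C..ennreal hi * ennreal C}"
    unfolding total[symmetric] by (rule nn_integral_count_space_mixture_bounds[OF _ _ _ inner_AE]) (simp_all add: \<psi>_def)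
  then show ?thesis
    using \<open>C \<ge> 0\<close> by (simp add: nn_lattice_sum_def lattice_term[unfolded u_def] u_def ennreal_mult'')
qed

lemma nn_lattice_sum_powr_average:
  fixes f g :: "real \<Rightarrow> real" and a x \<zeta> L U :: real
  assumes "0 < a" "0 < x" "\<zeta> < 1"
    and f_measurable[measurable]: "f \<in> borel_measurable borel"
    and f_nonneg: "\<And>u. 0 \<le> u \<Longrightarrow> 0 \<le> f u"
    and bounds: "\<And>x. 0 < x \<Longrightarrow> nn_lattice_sum a x f \<in> {ennreal L..ennreal U}"
    and g: "\<And>u. 0 < u \<Longrightarrow> ((\<lambda>s. s powr -\<zeta> * f (u * s)) has_integral g u) {0..1}"
  shows "nn_lattice_sum a x g \<in> {ennreal (L / (1 - \<zeta>))..ennreal (U / (1 - \<zeta>))}"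
proof -
  define \<psi> where "\<psi> s = ennreal (s powr -\<zeta>) * indicator {0..1} s" for s :: real
  have lattice_term: "ennreal (g (x * a powi j)) = (\<integral>\<^sup>+s. ennreal (f (x * s * a powi j)) * \<psi> s \<partial>lborel)" for j
  proof -
    have u: "0 < x * a powi j"
      using assms by simp
    have "(\<integral>\<^sup>+s. ennreal (s powr -\<zeta> * f (x * a powi j * s)) * indicator {0..1} s \<partial>lborel) = ennreal (g (x * a powi j))"
      by (rule nn_integral_has_integral_lebesgue'[OF _ g[OF u]]) (use assms in \<open>auto intro!: mult_nonneg_nonneg f_nonneg\<close>)
    then show ?thesis
      by (simp add: \<psi>_def ennreal_mult' mult_ac)
  qed
  have "(\<integral>\<^sup>+s. 1 * \<psi> s \<partial>lborel) = ennreal (1 / (1 - \<zeta>))"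
    using nn_integral_has_integral_lebesgue'[OF _ has_integral_powr_from_0[of "-\<zeta>" 1]] assms
    by (simp add: \<psi>_def)
  moreover have inner_AE: "AE s in lborel. \<psi> s \<noteq> 0 \<longrightarrow>
      (\<integral>\<^sup>+j. ennreal (f (x * s * a powi j)) \<partial>count_space UNIV) \<in> {ennreal L * 1..ennreal U * 1}"
    using AE_lborel_singleton[of 0]
  proof (eventually_elim, intro impI)
    fix s :: real
    assume "s \<noteq> 0" and "\<psi> s \<noteq> 0"
    then have "0 < x * s"
      using assms by (auto simp: \<psi>_def indicator_def split: if_splits)
    then show "(\<integral>\<^sup>+j. ennreal (f (x * s * a powi j)) \<partial>count_space UNIV) \<in> {ennreal L * 1..ennreal U * 1}"
      using bounds by (simp add: nn_lattice_sum_def)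
  qed
  ultimately have "(\<integral>\<^sup>+j. \<integral>\<^sup>+s. ennreal (f (x * s * a powi j)) * \<psi> s \<partial>lborel \<partial>count_space UNIV)
      \<in> {ennreal L * ennreal (1 / (1 - \<zeta>))..ennreal U * ennreal (1 / (1 - \<zeta>))}"
    using nn_integral_count_space_mixture_bounds[OF _ _ _ inner_AE] by (simp add: \<psi>_def)
  moreover have "ennreal c * ennreal (1 / (1 - \<zeta>)) = ennreal (c / (1 - \<zeta>))" for c
    using assms by (subst ennreal_mult''[symmetric]) auto
  ultimately show ?thesis
    by (simp add: nn_lattice_sum_def lattice_term)
qed

lemma has_integral_powr_exp_minus:
  fixes \<zeta> c :: real
  assumes "-1 < \<zeta>" "0 < c"
  shows "((\<lambda>y. y powr \<zeta> * exp (- c * y)) has_integral c powr (-\<zeta> - 1) * Gamma (\<zeta> + 1)) {0..}"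
proof -
  define h where "h y = indicator {0..} y * (y powr \<zeta> * exp (- c * y))" for y :: real
  have Gamma: "((\<lambda>y. y powr \<zeta> * exp (- y)) has_integral Gamma (\<zeta> + 1)) {0..}"
    using Gamma_integral_real[of "\<zeta> + 1"] assms by (simp add: exp_minus field_simps)
  have h_measurable: "h \<in> borel_measurable borel"
    unfolding h_def by measurable
  then have "(\<integral>\<^sup>+y. ennreal (h y) \<partial>lborel) = ennreal (1 / c) * (\<integral>\<^sup>+y. ennreal (h (0 + 1 / c * y)) \<partial>lborel)"
    using nn_integral_real_affine[of "\<lambda>y. ennreal (h y)" "1 / c" 0] assms by simp
  also have "\<dots> = ennreal (1 / c) * (\<integral>\<^sup>+y. ennreal (c powr -\<zeta>) * (ennreal (y powr \<zeta> * exp (- y)) * indicator {0..} y) \<partial>lborel)"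
  proof -
    have "h (0 + 1 / c * y) = c powr -\<zeta> * (y powr \<zeta> * exp (- y)) * indicator {0..} y" for y
      using assms by (auto simp: h_def indicator_def powr_divide powr_minus_divide zero_le_divide_iff)
    then show ?thesis
      by (simp add: ennreal_mult' ennreal_mult'' ennreal_indicator mult.assoc)
  qed
  also have "\<dots> = ennreal (c powr (-\<zeta> - 1) * Gamma (\<zeta> + 1))"
    using assms by (simp add: nn_integral_cmult nn_integral_has_integral_lebesgue'[OF _ Gamma]
        powr_diff ennreal_mult'[symmetric] divide_inverse)
  finally have "(h has_integral c powr (-\<zeta> - 1) * Gamma (\<zeta> + 1)) UNIV"
    using h_measurable assms Gamma_real_pos[of "\<zeta> + 1"] by (intro nn_integral_has_integral) (auto simp: h_def)
  moreover have "h = (\<lambda>y. if y \<in> {0..} then y powr \<zeta> * exp (- c * y) else 0)"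
    by (auto simp: h_def indicator_def)
  ultimately show ?thesis
    by (simp only: has_integral_restrict_UNIV)
qed

lemma has_integral_powr_exp_minus_difference:
  fixes \<zeta> :: real
  assumes "-1 < \<zeta>"
  shows "((\<lambda>y. y powr \<zeta> * (2 * exp (- y) - 2 * exp (- 2 * y))) has_integral (2 - 2 powr -\<zeta>) * Gamma (\<zeta> + 1)) {0..}"
proof -
  have "((\<lambda>y. 2 * (y powr \<zeta> * exp (- 1 * y)) - 2 * (y powr \<zeta> * exp (- 2 * y))) has_integral
      2 * (1 powr (-\<zeta> - 1) * Gamma (\<zeta> + 1)) - 2 * (2 powr (-\<zeta> - 1) * Gamma (\<zeta> + 1))) {0..}"
    using assms by (intro has_integral_diff has_integral_mult_right has_integral_powr_exp_minus) auto
  moreover have "2 * (1 powr (-\<zeta> - 1) * Gamma (\<zeta> + 1)) - 2 * (2 powr (-\<zeta> - 1) * Gamma (\<zeta> + 1))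
      = (2 - 2 powr -\<zeta>) * Gamma (\<zeta> + 1)"
    by (simp add: powr_diff algebra_simps)
  moreover have "(\<lambda>y. 2 * (y powr \<zeta> * exp (- 1 * y)) - 2 * (y powr \<zeta> * exp (- 2 * y)))
      = (\<lambda>y. y powr \<zeta> * (2 * exp (- y) - 2 * exp (- 2 * y)))"
    by (simp add: fun_eq_iff algebra_simps)
  ultimately show ?thesis
    by simp
qed

lemma has_integral_exp_minus_interval:
  fixes u :: real
  assumes "0 \<le> u"
  shows "((\<lambda>y. exp (- y)) has_integral 1 - exp (- u)) {0..u}"
proof -
  have "((\<lambda>y. exp (- y)) has_integral (- exp (- u)) - (- exp (- 0))) {0..u}"
    using assms by (intro fundamental_theorem_of_calculus)
      (auto intro!: derivative_eq_intros simp flip: has_real_derivative_iff_has_vector_derivative)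
  then show ?thesis
    by simp
qed

lemma has_integral_exp_minus_interval_squared:
  fixes u :: real
  assumes "0 \<le> u"
  shows "((\<lambda>y. 2 * exp (- y) - 2 * exp (- 2 * y)) has_integral (1 - exp (- u))\<^sup>2) {0..u}"
proof -
  have "((\<lambda>y. 2 * exp (- y) - 2 * exp (- 2 * y)) has_integral
      (exp (- 2 * u) - 2 * exp (- u)) - (exp (- 2 * 0) - 2 * exp (- 0))) {0..u}"
    using assms by (intro fundamental_theorem_of_calculus)
      (auto intro!: derivative_eq_intros simp flip: has_real_derivative_iff_has_vector_derivative)
  moreover have "exp (- 2 * u) = exp (- u) ^ 2"
    by (simp flip: exp_of_nat_mult)
  ultimately show ?thesis
    by (simp add: power2_eq_square algebra_simps)
qed

lemma has_integral_one_minus_exp_rescaled: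
  fixes u :: real
  shows "((\<lambda>s. u * (1 - exp (- (u * s)))) has_integral exp (- u) - 1 + u) {0..1}"
proof -
  have "((\<lambda>s. u * (1 - exp (- (u * s)))) has_integral
      (u * 1 + exp (- (u * 1))) - (u * 0 + exp (- (u * 0)))) {0..1}"
    by (intro fundamental_theorem_of_calculus)
      (auto intro!: derivative_eq_intros simp flip: has_real_derivative_iff_has_vector_derivative
        simp: algebra_simps)
  then show ?thesis
    by (simp add: algebra_simps)
qed

lemma has_integral_one_minus_exp_rescaled_squared:
  fixes u :: real
  shows "((\<lambda>s. u * (1 - exp (- (u * s)))\<^sup>2) has_integral
           2 * exp (- u) - 1/2 * exp (- 2 * u) + u - 3/2) {0..1}"
proof -
  have square: "exp (- (s * (u * 2))) = exp (- (s * u)) * exp (- (s * u))" for s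
    by (simp flip: exp_add)
  have "((\<lambda>s. u * (1 - exp (- (u * s)))\<^sup>2) has_integral
      (u * 1 + 2 * exp (- (u * 1)) - exp (- 2 * (u * 1)) / 2)
        - (u * 0 + 2 * exp (- (u * 0)) - exp (- 2 * (u * 0)) / 2)) {0..1}"
    by (intro fundamental_theorem_of_calculus)
      (auto intro!: derivative_eq_intros simp flip: has_real_derivative_iff_has_vector_derivative
        simp: algebra_simps power2_eq_square square)
  then show ?thesis
    by (simp add: algebra_simps)
qed

lemma has_integral_powr_rescaled:
  fixes F :: "real \<Rightarrow> real" and u \<zeta> V :: real
  assumes "0 < u" and "((\<lambda>s. u * F (u * s)) has_integral V) {0..1}"
  shows "((\<lambda>s. s powr -\<zeta> * ((u * s) powr \<zeta> * F (u * s))) has_integral u powr (\<zeta> - 1) * V) {0..1}"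
proof -
  have rescale: "s powr -\<zeta> * ((u * s) powr \<zeta> * F (u * s)) = u powr (\<zeta> - 1) * (u * F (u * s))"
    if "s \<in> {0..1} - {0}" for s
    using assms that by (simp add: powr_mult powr_minus powr_diff field_simps)
  show ?thesis
    by (rule has_integral_spike_finite[of "{0}", OF _ rescale has_integral_mult_right[OF assms(2)]]) simp
qed

lemma nn_lattice_sum_powr_exp_minus:
  fixes a x \<zeta> :: real
  assumes "0 < a" "a < 1" "0 < x" "0 < \<zeta>"
  shows "nn_lattice_sum a x (\<lambda>u. u powr \<zeta> * exp (- u))
      \<in> {ennreal (a powr \<zeta> / (1 - a powr \<zeta>) * Gamma (\<zeta> + 1))..ennreal (1 / (1 - a powr \<zeta>) * Gamma (\<zeta> + 1))}"
proof (rule nn_lattice_sum_powr_mixture[where \<phi>="\<lambda>y. exp (- y)" and R="\<lambda>u. {u..}"])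
  fix u :: real
  show "((\<lambda>y. u powr \<zeta> * exp (- y)) has_integral u powr \<zeta> * exp (- u)) {u..}"
    using has_integral_mult_right[OF has_integral_exp_minus_to_infinity[of 1 u]] by simp
next
  show "((\<lambda>y. y powr \<zeta> * exp (- y)) has_integral Gamma (\<zeta> + 1)) {0..}"
    using has_integral_powr_exp_minus[of \<zeta> 1] assms by simp
qed (use assms lattice_powr_sum_below in auto)

lemma nn_lattice_sum_powr_one_minus_exp:
  fixes a x \<zeta> :: real
  assumes "0 < a" "a < 1" "0 < x" "-1 < \<zeta>" "\<zeta> < 0"
  shows "nn_lattice_sum a x (\<lambda>u. u powr \<zeta> * (1 - exp (- u)))
      \<in> {ennreal (a powr -\<zeta> / (1 - a powr -\<zeta>) * Gamma (\<zeta> + 1))..ennreal (1 / (1 - a powr -\<zeta>) * Gamma (\<zeta> + 1))}"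
proof (rule nn_lattice_sum_powr_mixture[where \<phi>="\<lambda>y. exp (- y)" and R="\<lambda>u. {0..u}"])
  fix u :: real
  assume "0 < u"
  then show "((\<lambda>y. u powr \<zeta> * exp (- y)) has_integral u powr \<zeta> * (1 - exp (- u))) {0..u}"
    by (intro has_integral_mult_right has_integral_exp_minus_interval) simp
next
  show "((\<lambda>y. y powr \<zeta> * exp (- y)) has_integral Gamma (\<zeta> + 1)) {0..}"
    using has_integral_powr_exp_minus[of \<zeta> 1] assms by simp
qed (use assms lattice_powr_sum_above in auto)

lemma nn_lattice_sum_powr_one_minus_exp_squared:
  fixes a x \<zeta> :: real
  assumes "0 < a" "a < 1" "0 < x" "-1 < \<zeta>" "\<zeta> < 0"
  shows "nn_lattice_sum a x (\<lambda>u. u powr \<zeta> * (1 - exp (- u))\<^sup>2)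
      \<in> {ennreal (a powr -\<zeta> / (1 - a powr -\<zeta>) * ((2 - 2 powr -\<zeta>) * Gamma (\<zeta> + 1)))
          ..ennreal (1 / (1 - a powr -\<zeta>) * ((2 - 2 powr -\<zeta>) * Gamma (\<zeta> + 1)))}"
proof (rule nn_lattice_sum_powr_mixture[where \<phi>="\<lambda>y. 2 * exp (- y) - 2 * exp (- 2 * y)" and R="\<lambda>u. {0..u}"])
  fix u :: real
  assume "0 < u"
  then show "((\<lambda>y. u powr \<zeta> * (2 * exp (- y) - 2 * exp (- 2 * y))) has_integral u powr \<zeta> * (1 - exp (- u))\<^sup>2) {0..u}"
    by (intro has_integral_mult_right has_integral_exp_minus_interval_squared) simp
next
  show "((\<lambda>y. y powr \<zeta> * (2 * exp (- y) - 2 * exp (- 2 * y))) has_integral (2 - 2 powr -\<zeta>) * Gamma (\<zeta> + 1)) {0..}"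
    using assms by (intro has_integral_powr_exp_minus_difference) simp
next
  fix y :: real
  assume "0 \<le> y"
  then show "0 \<le> 2 * exp (- y) - 2 * exp (- 2 * y)"
    by simp
qed (use assms lattice_powr_sum_above in auto)

lemma h1_bounds:
  fixes a \<theta> \<zeta> t :: real
  assumes "0 < a" "a < 1" "0 < \<theta>" "0 < t" "0 < \<zeta>"
  shows "h1 a \<theta> \<zeta> t \<in> {Gamma (\<zeta> + 1) / (a powr -\<zeta> - 1)..a powr -\<zeta> * Gamma (\<zeta> + 1) / (a powr -\<zeta> - 1)}"
proof -
  have q: "0 < a powr \<zeta>" "a powr \<zeta> < 1"
    using assms powr01_less_one by auto
  have "h1 a \<theta> \<zeta> t = (\<Sum>\<^sub>\<infinity>j. (\<theta> * t * a powi j) powr \<zeta> * exp (- (\<theta> * t * a powi j)))"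
    by (simp add: h1_def mult_ac)
  also have "\<dots> \<in> {a powr \<zeta> / (1 - a powr \<zeta>) * Gamma (\<zeta> + 1)..1 / (1 - a powr \<zeta>) * Gamma (\<zeta> + 1)}"
    using nn_lattice_sum_powr_exp_minus[of a "\<theta> * t" \<zeta>] assms q by (intro infsum_lattice_in_interval) auto
  finally have "h1 a \<theta> \<zeta> t \<in> {a powr \<zeta> / (1 - a powr \<zeta>) * Gamma (\<zeta> + 1)..1 / (1 - a powr \<zeta>) * Gamma (\<zeta> + 1)}" .
  moreover have "a powr \<zeta> / (1 - a powr \<zeta>) = 1 / (a powr -\<zeta> - 1)" "1 / (1 - a powr \<zeta>) = a powr -\<zeta> / (a powr -\<zeta> - 1)"
    using q by (simp_all add: powr_minus field_simps)
  ultimately show ?thesis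
    by simp
qed

lemma h2_bounds:
  fixes a \<theta> \<zeta> t :: real
  assumes "0 < a" "a < 1" "0 < \<theta>" "0 < t" "-1 < \<zeta>" "\<zeta> < 0"
  shows "h2 a \<theta> \<zeta> t \<in> {a powr -\<zeta> * Gamma (\<zeta> + 1) / (1 - a powr -\<zeta>)..Gamma (\<zeta> + 1) / (1 - a powr -\<zeta>)}"
proof -
  have "a powr -\<zeta> < 1"
    using assms powr01_less_one by simp
  have "h2 a \<theta> \<zeta> t = (\<Sum>\<^sub>\<infinity>j. (\<theta> * t * a powi j) powr \<zeta> * (1 - exp (- (\<theta> * t * a powi j))))"
    by (simp add: h2_def mult_ac)
  also have "\<dots> \<in> {a powr -\<zeta> / (1 - a powr -\<zeta>) * Gamma (\<zeta> + 1)..1 / (1 - a powr -\<zeta>) * Gamma (\<zeta> + 1)}"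
    using nn_lattice_sum_powr_one_minus_exp[of a "\<theta> * t" \<zeta>] assms \<open>a powr -\<zeta> < 1\<close>
    by (intro infsum_lattice_in_interval) (auto intro!: less_imp_le[OF Gamma_real_pos])
  finally show ?thesis
    by simp
qed

lemma h3_bounds:
  fixes a \<theta> \<zeta> t :: real
  assumes "0 < a" "a < 1" "0 < \<theta>" "0 < t" "-1 < \<zeta>" "\<zeta> < 0"
  shows "h3 a \<theta> \<zeta> t \<in> {a powr -\<zeta> * (2 - 2 powr -\<zeta>) * Gamma (\<zeta> + 1) / (1 - a powr -\<zeta>)
                          ..(2 - 2 powr -\<zeta>) * Gamma (\<zeta> + 1) / (1 - a powr -\<zeta>)}"
proof -
  have "a powr -\<zeta> < 1" "2 powr -\<zeta> < 2"
    using assms powr01_less_one powr_less_mono[of "-\<zeta>" 1 2] by auto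
  have "h3 a \<theta> \<zeta> t = (\<Sum>\<^sub>\<infinity>j. (\<theta> * t * a powi j) powr \<zeta> * (1 - exp (- (\<theta> * t * a powi j)))\<^sup>2)"
    by (simp add: h3_def mult_ac)
  also have "\<dots> \<in> {a powr -\<zeta> / (1 - a powr -\<zeta>) * ((2 - 2 powr -\<zeta>) * Gamma (\<zeta> + 1))
                  ..1 / (1 - a powr -\<zeta>) * ((2 - 2 powr -\<zeta>) * Gamma (\<zeta> + 1))}"
    using nn_lattice_sum_powr_one_minus_exp_squared[of a "\<theta> * t" \<zeta>] assms \<open>a powr -\<zeta> < 1\<close> \<open>2 powr -\<zeta> < 2\<close>
    by (intro infsum_lattice_in_interval) (auto intro!: less_imp_le[OF Gamma_real_pos])
  finally show ?thesis
    by (simp add: mult.assoc)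
qed

lemma ht2_bounds:
  fixes a \<theta> \<zeta> t :: real
  assumes "0 < a" "a < 1" "0 < \<theta>" "0 < t" "-1 < \<zeta>" "\<zeta> < 0"
  shows "ht2 a \<theta> \<zeta> t \<in> {a powr -\<zeta> * Gamma (\<zeta> + 1) / ((1 - a powr -\<zeta>) * (1 - \<zeta>))
                           ..Gamma (\<zeta> + 1) / ((1 - a powr -\<zeta>) * (1 - \<zeta>))}"
proof -
  have "a powr -\<zeta> < 1"
    using assms powr01_less_one by simp
  define g where "g u = u powr (\<zeta> - 1) * (exp (- u) - 1 + u)" for u :: real
  have integral: "((\<lambda>s. s powr -\<zeta> * ((u * s) powr \<zeta> * (1 - exp (- (u * s))))) has_integral g u) {0..1}"
    if "0 < u" for u
    unfolding g_def using that by (intro has_integral_powr_rescaled has_integral_one_minus_exp_rescaled)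
  have "nn_lattice_sum a (\<theta> * t) g
      \<in> {ennreal (a powr -\<zeta> / (1 - a powr -\<zeta>) * Gamma (\<zeta> + 1) / (1 - \<zeta>))
         ..ennreal (1 / (1 - a powr -\<zeta>) * Gamma (\<zeta> + 1) / (1 - \<zeta>))}"
    using assms integral nn_lattice_sum_powr_one_minus_exp
    by (intro nn_lattice_sum_powr_average[where f="\<lambda>v. v powr \<zeta> * (1 - exp (- v))"]) auto
  moreover have "0 \<le> g u" if "0 < u" for u
    by (rule has_integral_nonneg[OF integral[OF that]]) (use that in \<open>simp add: zero_le_mult_iff\<close>)
  ultimately have "(\<Sum>\<^sub>\<infinity>j. g (\<theta> * t * a powi j))
      \<in> {a powr -\<zeta> / (1 - a powr -\<zeta>) * Gamma (\<zeta> + 1) / (1 - \<zeta>)..1 / (1 - a powr -\<zeta>) * Gamma (\<zeta> + 1) / (1 - \<zeta>)}"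
    using assms \<open>a powr -\<zeta> < 1\<close> by (intro infsum_lattice_in_interval) (auto intro!: less_imp_le[OF Gamma_real_pos])
  moreover have "ht2 a \<theta> \<zeta> t = (\<Sum>\<^sub>\<infinity>j. g (\<theta> * t * a powi j))"
    by (simp add: ht2_def g_def mult_ac)
  ultimately show ?thesis
    by simp
qed

lemma ht3_bounds:
  fixes a \<theta> \<zeta> t :: real
  assumes "0 < a" "a < 1" "0 < \<theta>" "0 < t" "-1 < \<zeta>" "\<zeta> < 0"
  shows "ht3 a \<theta> \<zeta> t \<in> {a powr -\<zeta> * (2 - 2 powr -\<zeta>) * Gamma (\<zeta> + 1) / ((1 - a powr -\<zeta>) * (1 - \<zeta>))
                           ..(2 - 2 powr -\<zeta>) * Gamma (\<zeta> + 1) / ((1 - a powr -\<zeta>) * (1 - \<zeta>))}"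
proof -
  have "a powr -\<zeta> < 1" "2 powr -\<zeta> < 2"
    using assms powr01_less_one powr_less_mono[of "-\<zeta>" 1 2] by auto
  define g where "g u = u powr (\<zeta> - 1) * (2 * exp (- u) - 1/2 * exp (- 2 * u) + u - 3/2)" for u :: real
  have integral: "((\<lambda>s. s powr -\<zeta> * ((u * s) powr \<zeta> * (1 - exp (- (u * s)))\<^sup>2)) has_integral g u) {0..1}"
    if "0 < u" for u
    unfolding g_def using that by (intro has_integral_powr_rescaled has_integral_one_minus_exp_rescaled_squared)
  have "nn_lattice_sum a (\<theta> * t) g
      \<in> {ennreal (a powr -\<zeta> / (1 - a powr -\<zeta>) * ((2 - 2 powr -\<zeta>) * Gamma (\<zeta> + 1)) / (1 - \<zeta>))
         ..ennreal (1 / (1 - a powr -\<zeta>) * ((2 - 2 powr -\<zeta>) * Gamma (\<zeta> + 1)) / (1 - \<zeta>))}"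
    using assms integral nn_lattice_sum_powr_one_minus_exp_squared
    by (intro nn_lattice_sum_powr_average[where f="\<lambda>v. v powr \<zeta> * (1 - exp (- v))\<^sup>2"]) auto
  moreover have "0 \<le> g u" if "0 < u" for u
    by (rule has_integral_nonneg[OF integral[OF that]]) simp
  ultimately have "(\<Sum>\<^sub>\<infinity>j. g (\<theta> * t * a powi j))
      \<in> {a powr -\<zeta> / (1 - a powr -\<zeta>) * ((2 - 2 powr -\<zeta>) * Gamma (\<zeta> + 1)) / (1 - \<zeta>)
         ..1 / (1 - a powr -\<zeta>) * ((2 - 2 powr -\<zeta>) * Gamma (\<zeta> + 1)) / (1 - \<zeta>)}"
    using assms \<open>a powr -\<zeta> < 1\<close> \<open>2 powr -\<zeta> < 2\<close>
    by (intro infsum_lattice_in_interval) (auto intro!: less_imp_le[OF Gamma_real_pos])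
  moreover have "ht3 a \<theta> \<zeta> t = (\<Sum>\<^sub>\<infinity>j. g (\<theta> * t * a powi j))"
    by (simp add: ht3_def g_def mult_ac)
  ultimately show ?thesis
    by (simp add: mult.assoc)
qed

theorem proposition3p1p1:
  fixes N :: nat and c \<sigma> a \<theta> \<zeta> t :: real
  assumes "N \<ge> 2" and "0 < c" and "c < real N" and "\<sigma> > 0"
    and "a = c / real N"
    and "\<theta> = \<sigma> * (real N ^ 2 / c - 1) / (real N - 1)"
    and "t > 0"
  shows "(\<zeta> > 0 \<longrightarrow>
            Gamma (\<zeta> + 1) / (a powr (-\<zeta>) - 1) \<le> h1 a \<theta> \<zeta> t \<and>
            h1 a \<theta> \<zeta> t \<le> a powr (-\<zeta>) * Gamma (\<zeta> + 1) / (a powr (-\<zeta>) - 1))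
       \<and> (-1 < \<zeta> \<and> \<zeta> < 0 \<longrightarrow>
            (a powr (-\<zeta>) * Gamma (\<zeta> + 1) / (1 - a powr (-\<zeta>)) \<le> h2 a \<theta> \<zeta> t \<and>
             h2 a \<theta> \<zeta> t \<le> Gamma (\<zeta> + 1) / (1 - a powr (-\<zeta>))) \<and>
            (a powr (-\<zeta>) * (2 - 2 powr (-\<zeta>)) * Gamma (\<zeta> + 1) / (1 - a powr (-\<zeta>)) \<le> h3 a \<theta> \<zeta> t \<and>
             h3 a \<theta> \<zeta> t \<le> (2 - 2 powr (-\<zeta>)) * Gamma (\<zeta> + 1) / (1 - a powr (-\<zeta>))) \<and>
            (a powr (-\<zeta>) * Gamma (\<zeta> + 1) / ((1 - a powr (-\<zeta>)) * (1 - \<zeta>)) \<le> ht2 a \<theta> \<zeta> t \<and>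
             ht2 a \<theta> \<zeta> t \<le> Gamma (\<zeta> + 1) / ((1 - a powr (-\<zeta>)) * (1 - \<zeta>))) \<and>
            (a powr (-\<zeta>) * (2 - 2 powr (-\<zeta>)) * Gamma (\<zeta> + 1) / ((1 - a powr (-\<zeta>)) * (1 - \<zeta>)) \<le> ht3 a \<theta> \<zeta> t \<and>
             ht3 a \<theta> \<zeta> t \<le> (2 - 2 powr (-\<zeta>)) * Gamma (\<zeta> + 1) / ((1 - a powr (-\<zeta>)) * (1 - \<zeta>))))"
proof -
  have N: "2 \<le> real N"
    using assms(1) by simp
  have a: "0 < a" "a < 1"
    using assms(2,3,5) N by auto
  have "real N \<le> real N ^ 2"
    using N by (simp add: power2_eq_square)
  then have "c < real N ^ 2"
    using assms(3) by linarith
  then have "1 < real N ^ 2 / c"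
    using assms(2) by (simp add: less_divide_eq)
  then have "0 < \<theta>"
    using assms(4,6) N by simp
  then show ?thesis
    using h1_bounds[OF a \<open>0 < \<theta>\<close> assms(7)] h2_bounds[OF a \<open>0 < \<theta>\<close> assms(7)]
      h3_bounds[OF a \<open>0 < \<theta>\<close> assms(7)] ht2_bounds[OF a \<open>0 < \<theta>\<close> assms(7)]
      ht3_bounds[OF a \<open>0 < \<theta>\<close> assms(7)]
    by simp
qed

end
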